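(* Let $N \ge 1$ and let $(\mathbf{x}_1,y_1),\dots,(\mathbf{x}_N,y_N)$ be labeled data points with labels in $\{1,\dots,C\}$. Let $\hat{P'}(y\mid\mathbf{x})$ and $\hat{P}(y\mid\mathbf{x};\theta_t)$ be conditional probability distributions over the labels, with $\hat{P}(y_i\mid\mathbf{x}_i;\theta_t) > 0$ for every $i$. Define the Dynamic Importance Loss $$\mathcal{L}_{\text{DIMP}}(\theta_t, D_Q) = -\frac{1}{N}\sum_{i=1}^{N} \frac{\hat{P'}(y_i\mid\mathbf{x}_i)}{\hat{P}(y_i\mid\mathbf{x}_i;\theta_t)} \log \hat{P}(y_i\mid\mathbf{x}_i;\theta_t).$$ Then $$\mathcal{L}_{\text{DIMP}}(\theta_t, D_Q) \ \ge\ -\frac{2}{N}\sum_{i=1}^{N}\hat{P'}(y_i\mid\mathbf{x}_i)\log \hat{P}(y_i\mid\mathbf{x}_i;\theta_t) \;+\; \frac{1}{N}\sum_{i=1}^{N}\hat{P}(y_i\mid\mathbf{x}_i;\theta_t)\log \hat{P}(y_i\mid\mathbf{x}_i;\theta_t).$$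
   Context: $D_Q=\{(\mathbf{x}_i,y_i)\}_{i=1}^N$ is a (synthetic) training set. $\hat{P'}(y\mid\mathbf{x})$ is a fixed classifier's predicted probability of label $y$ given input $\mathbf{x}$ (trained on a small real-world dataset), and $\hat{P}(y\mid\mathbf{x};\theta_t)$ is the predicted probability of the model being trained, with parameters $\theta_t$ at optimization step $t$. $\log$ denotes the natural logarithm. *)

theory Defs
  imports "HOL-Analysis.Analysis"
begin

definition cond_dist :: "nat \<Rightarrow> ('x \<Rightarrow> nat \<Rightarrow> real) \<Rightarrow> bool" where
  "cond_dist C P \<longleftrightarrow> (\<forall>x. (\<forall>c\<in>{1..C}. P x c \<ge> 0) \<and> (\<Sum>c=1..C. P x c) = 1)"

text \<open>Dynamic Importance Loss; the model P already has its parameters theta_t fixed.\<close>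
definition L_DIMP :: "nat \<Rightarrow> (nat \<Rightarrow> 'x) \<Rightarrow> (nat \<Rightarrow> nat) \<Rightarrow>
    ('x \<Rightarrow> nat \<Rightarrow> real) \<Rightarrow> ('x \<Rightarrow> nat \<Rightarrow> real) \<Rightarrow> real" where
  "L_DIMP N xs ys P' P =
     - (1 / real N) * (\<Sum>i=1..N. (P' (xs i) (ys i) / P (xs i) (ys i)) * ln (P (xs i) (ys i)))"

end

theory Submission
  imports Defs
begin

text \<open>Every term of the loss carries the factor \<open>ln p \<le> 0\<close>, so it suffices to bound the
  importance weight \<open>q / p\<close> from below by \<open>2 q - p\<close>. This holds for every \<open>p > 0\<close> and
  \<open>0 \<le> q \<le> 1\<close> because \<open>p (q / p - 2 q + p) = q (1 - q) + (p - q)\<^sup>2\<close>.\<close>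

lemma cond_dist_nonneg:
  assumes "cond_dist C P" "c \<in> {1..C}"
  shows "0 \<le> P x c"
  using assms unfolding cond_dist_def by auto

lemma cond_dist_le_one:
  assumes "cond_dist C P" "c \<in> {1..C}"
  shows "P x c \<le> 1"
proof -
  have "P x c \<le> (\<Sum>c=1..C. P x c)"
    using assms by (intro member_le_sum) (auto simp: cond_dist_def)
  also have "\<dots> = 1"
    using assms(1) by (simp add: cond_dist_def)
  finally show ?thesis .
qed

lemma importance_weight_ge:
  fixes p q :: real
  assumes "0 < p" "0 \<le> q" "q \<le> 1"
  shows "2 * q - p \<le> q / p"
proof -
  have "p * (q / p - (2 * q - p)) = q * (1 - q) + (p - q)\<^sup>2"
    using assms(1) by (simp add: field_simps power2_eq_square)
  also have "\<dots> \<ge> 0"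
    using assms(2,3) by simp
  finally show ?thesis
    using assms(1) by (simp add: zero_le_mult_iff)
qed

lemma importance_weighted_log_le:
  fixes p q :: real
  assumes "0 < p" "p \<le> 1" "0 \<le> q" "q \<le> 1"
  shows "q / p * ln p \<le> (2 * q - p) * ln p"
  using importance_weight_ge[OF assms(1,3,4)] assms(1,2)
  by (intro mult_right_mono_neg) auto

theorem mainTheorem1:
  fixes N C :: nat and xs :: "nat \<Rightarrow> 'x" and ys :: "nat \<Rightarrow> nat"
    and P' P :: "'x \<Rightarrow> nat \<Rightarrow> real"
  assumes "N \<ge> 1"
    and "\<forall>i\<in>{1..N}. ys i \<in> {1..C}"
    and "cond_dist C P'" and "cond_dist C P"
    and "\<forall>i\<in>{1..N}. P (xs i) (ys i) > 0"
  shows "L_DIMP N xs ys P' P \<ge>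
           - (2 / real N) * (\<Sum>i=1..N. P' (xs i) (ys i) * ln (P (xs i) (ys i)))
           + (1 / real N) * (\<Sum>i=1..N. P (xs i) (ys i) * ln (P (xs i) (ys i)))"
proof -
  define p q where "p i = P (xs i) (ys i)" and "q i = P' (xs i) (ys i)" for i
  have termwise: "q i / p i * ln (p i) \<le> (2 * q i - p i) * ln (p i)" if "i \<in> {1..N}" for i
    using that assms(2-5) unfolding p_def q_def
    by (intro importance_weighted_log_le) (auto intro: cond_dist_nonneg cond_dist_le_one)
  have "(\<Sum>i=1..N. q i / p i * ln (p i)) \<le> (\<Sum>i=1..N. (2 * q i - p i) * ln (p i))"
    using termwise by (rule sum_mono)
  also have "\<dots> = 2 * (\<Sum>i=1..N. q i * ln (p i)) - (\<Sum>i=1..N. p i * ln (p i))"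
    by (simp add: left_diff_distrib sum_subtractf sum_distrib_left mult.assoc)
  finally have "- (1 / real N) * (\<Sum>i=1..N. q i / p i * ln (p i))
      \<ge> - (1 / real N) * (2 * (\<Sum>i=1..N. q i * ln (p i)) - (\<Sum>i=1..N. p i * ln (p i)))"
    by (intro mult_left_mono_neg) auto
  then show ?thesis
    unfolding L_DIMP_def p_def q_def by (simp add: algebra_simps)
qed

end
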